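(* Let $1\le q_1<q_2<\cdots$ be a strictly increasing sequence of integers with partial sums $S_n=q_1+\dots+q_n$. For each $n\in\mathbb{N}$ write $$f_n(x)=(1+x^{q_1})\cdots(1+x^{q_n})=\sum_{m=0}^{S_n}\gamma_m(n)x^m.$$ Suppose there exist positive integers $k_0$ and $n_0$ such that $$2k_0+q_{n+1}\le S_n\quad\text{for all } n\ge n_0,\qquad\text{and}\qquad \gamma_m(n_0)\ge 1\quad\text{for all integers } m \text{ with } k_0\le m\le S_{n_0}-k_0.$$ Then every integer $N\ge k_0$ is a sum of one or more distinct members of $\{q_1,q_2,\dots\}$. *)

theory Defs
  imports "HOL-Computational_Algebra.Polynomial"
begin

text \<open>The sequence is q 1, q 2, ... (values at index 0 are irrelevant).\<close>

definition S :: "(nat \<Rightarrow> nat) \<Rightarrow> nat \<Rightarrow> nat" where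
  "S q n = (\<Sum>i=1..n. q i)"

definition f :: "(nat \<Rightarrow> nat) \<Rightarrow> nat \<Rightarrow> int poly" where
  "f q n = (\<Prod>i=1..n. 1 + monom 1 (q i))"

definition gamma :: "(nat \<Rightarrow> nat) \<Rightarrow> nat \<Rightarrow> nat \<Rightarrow> int" where
  "gamma q n m = coeff (f q n) m"

end

theory Submission
  imports Defs
begin

text \<open>Expanding the product, \<open>\<gamma>\<^sub>m(n) \<noteq> 0\<close> only if \<open>m\<close> is a sum of distinct \<open>q\<^sub>i\<close> with
  \<open>i \<le> n\<close>. So the hypothesis on \<open>f\<^sub>n\<^sub>0\<close> says that every \<open>m\<close> in \<open>[k\<^sub>0, S\<^sub>n\<^sub>0 - k\<^sub>0]\<close> is such a
  subset sum. If every \<open>m\<close> in \<open>[k\<^sub>0, S\<^sub>n - k\<^sub>0]\<close> is one, then adding \<open>q\<^sub>n\<^sub>+\<^sub>1\<close> covers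
  \<open>[k\<^sub>0 + q\<^sub>n\<^sub>+\<^sub>1, S\<^sub>n\<^sub>+\<^sub>1 - k\<^sub>0]\<close>, and the growth condition \<open>2k\<^sub>0 + q\<^sub>n\<^sub>+\<^sub>1 \<le> S\<^sub>n\<close> makes the two
  intervals overlap, so \<open>[k\<^sub>0, S\<^sub>n\<^sub>+\<^sub>1 - k\<^sub>0]\<close> is covered. Since \<open>S\<^sub>n \<rightarrow> \<infinity>\<close>, every \<open>N \<ge> k\<^sub>0\<close>
  is reached.\<close>

definition is_subset_sum :: "(nat \<Rightarrow> nat) \<Rightarrow> nat \<Rightarrow> nat \<Rightarrow> bool" where
  "is_subset_sum q n m \<longleftrightarrow> (\<exists>I \<subseteq> {1..n}. sum q I = m)"

lemma is_subset_sum_0 [simp]: "is_subset_sum q n 0"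
  unfolding is_subset_sum_def by (intro exI[of _ "{}"]) simp

lemma is_subset_sum_Suc:
  assumes "is_subset_sum q n m"
  shows "is_subset_sum q (Suc n) m"
proof -
  have "{1..n} \<subseteq> {1..Suc n}" by auto
  with assms show ?thesis
    unfolding is_subset_sum_def by blast
qed

lemma is_subset_sum_add_Suc:
  assumes "is_subset_sum q n m"
  shows "is_subset_sum q (Suc n) (m + q (Suc n))"
proof -
  obtain I where I: "I \<subseteq> {1..n}" "sum q I = m"
    using assms unfolding is_subset_sum_def by blast
  then have "finite I" "Suc n \<notin> I"
    using finite_subset[OF I(1)] by auto
  then have "sum q (insert (Suc n) I) = m + q (Suc n)"
    using I by simp
  moreover have "insert (Suc n) I \<subseteq> {1..Suc n}"
    using I by auto
  ultimately show ?thesis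
    unfolding is_subset_sum_def by blast
qed

lemma coeff_mult_one_plus_monom:
  fixes p :: "'a::comm_semiring_1 poly"
  shows "coeff (p * (1 + monom 1 k)) m = coeff p m + (if k \<le> m then coeff p (m - k) else 0)"
  by (simp add: distrib_left mult.commute[of p] coeff_monom_mult)

lemma f_Suc: "f q (Suc n) = f q n * (1 + monom 1 (q (Suc n)))"
  unfolding f_def by (simp add: prod.nat_ivl_Suc')

lemma S_Suc: "S q (Suc n) = S q n + q (Suc n)"
  unfolding S_def by simp

lemma is_subset_sum_if_gamma_nonzero:
  "gamma q n m \<noteq> 0 \<Longrightarrow> is_subset_sum q n m"
proof (induction n arbitrary: m)
  case 0
  then show ?case
    by (simp add: gamma_def f_def coeff_1 split: if_splits)
next
  case (Suc n)
  then consider "gamma q n m \<noteq> 0"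
    | "q (Suc n) \<le> m" "gamma q n (m - q (Suc n)) \<noteq> 0"
    by (fastforce simp: gamma_def f_Suc coeff_mult_one_plus_monom split: if_splits)
  then show ?case
  proof cases
    case 1
    then show ?thesis by (simp add: Suc.IH is_subset_sum_Suc)
  next
    case 2
    then show ?thesis
      using is_subset_sum_add_Suc[OF Suc.IH[of "m - q (Suc n)"]] by simp
  qed
qed

lemma is_subset_sum_interval_Suc:
  assumes covered: "\<And>m. k \<le> m \<Longrightarrow> m \<le> S q n - k \<Longrightarrow> is_subset_sum q n m"
    and growth: "2 * k + q (Suc n) \<le> S q n"
    and m: "k \<le> m" "m \<le> S q (Suc n) - k"
  shows "is_subset_sum q (Suc n) m"
proof (cases "m \<le> S q n - k")
  case True
  then show ?thesis using covered m by (simp add: is_subset_sum_Suc)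
next
  case False
  then have "k \<le> m - q (Suc n)" "m - q (Suc n) \<le> S q n - k" "q (Suc n) \<le> m"
    using growth m by (auto simp: S_Suc)
  then show ?thesis
    using is_subset_sum_add_Suc[OF covered[of "m - q (Suc n)"]] by simp
qed

lemma is_subset_sum_interval:
  assumes covered: "\<And>m. k \<le> m \<Longrightarrow> m \<le> S q n0 - k \<Longrightarrow> is_subset_sum q n0 m"
    and growth: "\<And>n. n \<ge> n0 \<Longrightarrow> 2 * k + q (Suc n) \<le> S q n"
    and "n0 \<le> n" "k \<le> m" "m \<le> S q n - k"
  shows "is_subset_sum q n m"
  using \<open>n0 \<le> n\<close> \<open>k \<le> m\<close> \<open>m \<le> S q n - k\<close>
proof (induction n arbitrary: m rule: dec_induct)
  case base
  then show ?case using covered by blast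
next
  case (step n)
  then show ?case
    using is_subset_sum_interval_Suc[of k q n m] growth by blast
qed

lemma S_ge_index:
  assumes "\<And>i. i \<ge> 1 \<Longrightarrow> 1 \<le> q i"
  shows "n \<le> S q n"
proof -
  have "n = (\<Sum>i=1..n. 1::nat)" by simp
  also have "\<dots> \<le> S q n"
    unfolding S_def using assms by (intro sum_mono) simp
  finally show ?thesis .
qed

lemma strict_mono_on_atLeast:
  fixes g :: "nat \<Rightarrow> 'a::order"
  assumes "\<And>i. i \<ge> k \<Longrightarrow> g i < g (Suc i)"
  shows "strict_mono_on {k..} g"
proof (rule strict_mono_onI)
  fix i j assume "i \<in> {k..}" "j \<in> {k..}" "i < j"
  have "k \<le> i \<Longrightarrow> g i < g j"
    using \<open>i < j\<close>
  proof (induction i j rule: less_Suc_induct)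
    case (1 i)
    then show ?case by (rule assms)
  next
    case (2 i j l)
    then show ?case by (meson order.strict_trans less_imp_le order.trans)
  qed
  then show "g i < g j"
    using \<open>i \<in> {k..}\<close> by simp
qed

lemma is_subset_sum_imp_sum_image:
  assumes "inj_on q {1..}" "is_subset_sum q n m"
  obtains B where "finite B" "B \<subseteq> q ` {1..}" "m = \<Sum>B"
proof -
  obtain I where I: "I \<subseteq> {1..n}" "sum q I = m"
    using assms(2) unfolding is_subset_sum_def by blast
  then have "I \<subseteq> {1..}" "finite I"
    using finite_subset[OF I(1)] by auto
  then have "m = \<Sum>(q ` I)"
    using I(2) inj_on_subset[OF assms(1)] by (simp add: sum.reindex)
  then show thesis
    using that \<open>I \<subseteq> {1..}\<close> \<open>finite I\<close> by blast
qed

theorem theorem2p1: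
  fixes q :: "nat \<Rightarrow> nat" and k0 n0 :: nat
  assumes q_pos: "\<And>i. i \<ge> 1 \<Longrightarrow> 1 \<le> q i"
    and q_inc: "\<And>i. i \<ge> 1 \<Longrightarrow> q i < q (Suc i)"
    and k0_pos: "k0 \<ge> 1" and n0_pos: "n0 \<ge> 1"
    and growth: "\<And>n. n \<ge> n0 \<Longrightarrow> 2 * k0 + q (Suc n) \<le> S q n"
    and coeffs: "\<And>m. k0 \<le> m \<Longrightarrow> m \<le> S q n0 - k0 \<Longrightarrow> gamma q n0 m \<ge> 1"
  shows "\<forall>N::nat. N \<ge> k0 \<longrightarrow>
           (\<exists>B. finite B \<and> B \<noteq> {} \<and> B \<subseteq> q ` {1..} \<and> N = \<Sum>B)"
proof (intro allI impI)
  fix N assume N: "k0 \<le> N"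
  define n where "n = n0 + N + k0"
  have base: "\<And>m. k0 \<le> m \<Longrightarrow> m \<le> S q n0 - k0 \<Longrightarrow> is_subset_sum q n0 m"
    using coeffs by (intro is_subset_sum_if_gamma_nonzero) fastforce
  have "N \<le> S q n - k0"
    using S_ge_index[of q n, OF q_pos] unfolding n_def by simp
  then have "is_subset_sum q n N"
    using is_subset_sum_interval[OF base growth] N unfolding n_def by simp
  moreover have "strict_mono_on {1..} q"
    using q_inc by (rule strict_mono_on_atLeast)
  ultimately obtain B where "finite B" "B \<subseteq> q ` {1..}" "N = \<Sum>B"
    by (blast elim: is_subset_sum_imp_sum_image dest: strict_mono_on_imp_inj_on)
  moreover have "B \<noteq> {}"
    using \<open>N = \<Sum>B\<close> N k0_pos by auto
  ultimately show "\<exists>B. finite B \<and> B \<noteq> {} \<and> B \<subseteq> q ` {1..} \<and> N = \<Sum>B"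
    by blast
qed

end
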